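(* Let $V\in(\mathbb{R}\cup\{-\infty\})^{n\times p}$ have no row and no column identically equal to $-\infty$. Then $$\operatorname{inrad}(\operatorname{Col}(V))=\max_J \operatorname{inrad}(\operatorname{Col}(V[J])),$$ where the maximum is taken over all subsets $J\subset[p]$ of cardinality $n$ (with the convention that the maximum is $0$ if $p<n$). Moreover, if the inner radius $\operatorname{inrad}(\operatorname{Col}(V))$ is positive, the maximum is achieved by some $J$ such that $\operatorname{Col}(V[J])$ is simplicial.
   Context: $\mathbb{R}_{\max}=\mathbb{R}\cup\{-\infty\}$. $V[J]$ is the submatrix of $V$ formed by the columns with indices in $J$. $\operatorname{Col}(W)=\{Wx\}$ is the tropical cone generated by the columns of $W$, with $(Wx)_i=\max_k(W_{ik}+x_k)$. Hilbert's projective metric: $d(x,y)=\inf\{\lambda-\mu:\lambda,\mu\in\mathbb{R},\ \mu+y_i\le x_i\le\lambda+y_i\ \forall i\}$; $B(a,r)=\{x:d(a,x)\le r\}$. $\operatorname{inrad}(\mathcal C)$ is the supremum of the radii of balls $B(a,r)$ with $a\in\mathbb{R}^n$ included in $\mathcal C$. A vector $u$ of a tropical cone $\mathcal C$ is extreme if $u=v\vee w$ ($\vee$ = entrywise max) with $v,w\in\mathcal C$ implies $u=v$ or $u=w$; a tropical cone in $\mathbb{R}_{\max}^n$ is simplicial if it has precisely $n$ extreme directions (sets $\{\lambda+u:\lambda\in\mathbb{R}_{\max}\}$ with $u$ extreme). *)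

theory Defs
  imports "HOL-Analysis.Analysis" "HOL-Library.Extended_Real"
begin

text \<open>Max-plus semiring R_max = R \<union> {-\<infinity>} is represented inside ereal; elements of
R_max are the ereals different from \<infinity>. Vectors of R_max^n are ereal^'n, matrices
in R_max^{n x p} are ereal^'p^'n (rows indexed by 'n, columns by 'p).\<close>

definition rmax_vec :: "ereal^'n \<Rightarrow> bool" where
  "rmax_vec x \<longleftrightarrow> (\<forall>i. x$i \<noteq> \<infinity>)"

definition Col :: "'p set \<Rightarrow> ereal^'p^'n \<Rightarrow> (ereal^'n) set" where
  "Col K V = {y. \<exists>x::ereal^'p. rmax_vec x \<and> y = (\<chi> i. SUP k\<in>K. V$i$k + x$k)}"

definition hdist :: "ereal^'n \<Rightarrow> ereal^'n \<Rightarrow> ereal" where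
  "hdist x y = Inf {ereal (l - m) | l m. \<forall>i. ereal m + y$i \<le> x$i \<and> x$i \<le> ereal l + y$i}"

definition hball :: "real^'n \<Rightarrow> real \<Rightarrow> (ereal^'n) set" where
  "hball a r = {x. rmax_vec x \<and> hdist (\<chi> i. ereal (a$i)) x \<le> ereal r}"

definition inrad :: "(ereal^'n) set \<Rightarrow> ereal" where
  "inrad C = Sup {ereal r | r. \<exists>a::real^'n. hball a r \<subseteq> C}"

definition extreme :: "(ereal^'n) set \<Rightarrow> ereal^'n \<Rightarrow> bool" where
  "extreme C u \<longleftrightarrow> u \<in> C \<and> u \<noteq> (\<chi> i. -\<infinity>) \<and>
     (\<forall>v\<in>C. \<forall>w\<in>C. u = (\<chi> i. max (v$i) (w$i)) \<longrightarrow> u = v \<or> u = w)"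

definition ext_dirs :: "(ereal^'n) set \<Rightarrow> (ereal^'n) set set" where
  "ext_dirs C = {{(\<chi> i. l + u$i) | l. l \<noteq> \<infinity>} | u. extreme C u}"

definition simplicial :: "(ereal^'n) set \<Rightarrow> bool" where
  "simplicial C \<longleftrightarrow> finite (ext_dirs C) \<and> card (ext_dirs C) = CARD('n)"

end

theory Submission
  imports Defs
begin

text \<open>The Hilbert ball \<open>B(a,r)\<close> is the tropical cone generated by its \<open>n\<close> vertices
\<open>a - r(1 - e\<^sub>j)\<close>. If \<open>B(a,r) \<subseteq> Col(V)\<close> with \<open>r > 0\<close>, write the \<open>j\<close>-th vertex as a tropical
combination of columns: the term attaining coordinate \<open>j\<close> is a column \<open>k\<^sub>j\<close> which, after
scaling, lies below that vertex and touches it in coordinate \<open>j\<close>. These columns are pairwise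
distinct and already generate a cone containing \<open>B(a,r)\<close>; in that cone each of them is
extreme and no two are proportional, so \<open>Col(V[{k\<^sub>1,...,k\<^sub>n}])\<close> is simplicial. Hence every
ball inside \<open>Col(V)\<close> lies in a simplicial subcone spanned by \<open>n\<close> columns.\<close>

lemma finite_SUP_attained:
  fixes f :: "'a \<Rightarrow> 'b::complete_linorder"
  assumes "finite F" "F \<noteq> {}"
  obtains k where "k \<in> F" "(SUP k\<in>F. f k) = f k"
proof -
  have "(SUP k\<in>F. f k) \<in> f ` F"
    using assms by (simp add: cSup_eq_Max)
  then show ?thesis using that by auto
qed

lemma SUP_subset_bot_outside:
  fixes f :: "'a \<Rightarrow> 'b::complete_lattice"
  assumes "K \<subseteq> J" "\<And>k. k \<in> J - K \<Longrightarrow> f k = bot"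
  shows "(SUP k\<in>J. f k) = (SUP k\<in>K. f k)"
proof -
  have "J = K \<union> (J - K)" using assms(1) by blast
  then have "(SUP k\<in>J. f k) = sup (SUP k\<in>K. f k) (SUP k\<in>J - K. f k)"
    by (metis SUP_union)
  also have "(SUP k\<in>J - K. f k) = bot" using assms(2) by simp
  finally show ?thesis by simp
qed

lemma Col_memI: "rmax_vec x \<Longrightarrow> (\<chi> i. SUP k\<in>K. V$i$k + x$k) \<in> Col K V"
  unfolding Col_def by blast

lemma Col_mono:
  fixes V :: "ereal^'p^'n"
  assumes ent: "\<forall>i k. V$i$k \<noteq> \<infinity>" and "K \<subseteq> J"
  shows "Col K V \<subseteq> Col J V"
proof
  fix y assume "y \<in> Col K V"
  then obtain x where x: "rmax_vec x" and y: "y = (\<chi> i. SUP k\<in>K. V$i$k + x$k)"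
    unfolding Col_def by auto
  define x' where "x' = (\<chi> k. if k \<in> K then x$k else -\<infinity>)"
  have "(SUP k\<in>J. V$i$k + x'$k) = (SUP k\<in>K. V$i$k + x$k)" for i
  proof -
    have "V$i$k + x'$k = bot" if "k \<in> J - K" for k
      using that ent by (cases "V$i$k") (auto simp: x'_def bot_ereal_def)
    then have "(SUP k\<in>J. V$i$k + x'$k) = (SUP k\<in>K. V$i$k + x'$k)"
      by (rule SUP_subset_bot_outside[OF \<open>K \<subseteq> J\<close>])
    then show ?thesis by (simp add: x'_def)
  qed
  moreover have "rmax_vec x'" using x unfolding rmax_vec_def x'_def by auto
  ultimately show "y \<in> Col J V"
    using Col_memI[where x=x' and K=J and V=V] y by simp
qed

lemma column_in_Col:
  fixes V :: "ereal^'p^'n"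
  assumes ent: "\<forall>i k. V$i$k \<noteq> \<infinity>" and "k \<in> J"
  shows "column k V \<in> Col J V"
proof -
  have "column k V \<in> Col {k} V"
    using Col_memI[where x=0 and K="{k}" and V=V] by (simp add: rmax_vec_def column_def)
  then show ?thesis using Col_mono[OF ent] \<open>k \<in> J\<close> by blast
qed

lemma extreme_Col_eq_term:
  fixes V :: "ereal^'p^'n"
  assumes ent: "\<forall>i k. V$i$k \<noteq> \<infinity>" and ext: "extreme (Col J V) u" and x: "rmax_vec x"
  shows "finite F \<Longrightarrow> F \<noteq> {} \<Longrightarrow> F \<subseteq> J \<Longrightarrow> u = (\<chi> i. SUP k\<in>F. V$i$k + x$k) \<Longrightarrow>
    \<exists>k\<in>F. u = (\<chi> i. V$i$k + x$k)"
proof (induction F rule: finite_ne_induct)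
  case (singleton k)
  then show ?case by simp
next
  case (insert k0 F)
  let ?head = "\<chi> i. SUP k\<in>{k0}. V$i$k + x$k" and ?tail = "\<chi> i. SUP k\<in>F. V$i$k + x$k"
  have "Col {k0} V \<subseteq> Col J V" "Col F V \<subseteq> Col J V"
    using Col_mono[OF ent] insert.prems(1) by simp_all
  then have "?head \<in> Col J V" "?tail \<in> Col J V"
    using Col_memI[OF x] by blast+
  moreover have "u = (\<chi> i. max (?head$i) (?tail$i))"
    using insert.prems by (simp add: sup_max)
  ultimately have "u = ?head \<or> u = ?tail"
    using ext unfolding extreme_def by blast
  then show ?case
    using insert.IH insert.prems by auto
qed

lemma extreme_Col_imp_scaled_column:
  fixes V :: "ereal^'p^'n"
  assumes ent: "\<forall>i k. V$i$k \<noteq> \<infinity>" and ext: "extreme (Col J V) u"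
  obtains k c where "k \<in> J" "u = (\<chi> i. ereal c + V$i$k)"
proof -
  obtain x where x: "rmax_vec x" and u: "u = (\<chi> i. SUP k\<in>J. V$i$k + x$k)"
    using ext unfolding extreme_def Col_def by auto
  have u_ne: "u \<noteq> (\<chi> i. -\<infinity>)" using ext unfolding extreme_def by simp
  then have "J \<noteq> {}" using u by (auto simp: bot_ereal_def)
  then obtain k where k: "k \<in> J" "u = (\<chi> i. V$i$k + x$k)"
    using extreme_Col_eq_term[OF ent ext x, of J] u by auto
  have "x$k \<noteq> -\<infinity>"
  proof
    assume "x$k = -\<infinity>"
    then have "u = (\<chi> i. -\<infinity>)" using k(2) ent by (simp add: vec_eq_iff)
    then show False using u_ne by simp
  qed
  moreover have "x$k \<noteq> \<infinity>" using x unfolding rmax_vec_def by auto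
  ultimately obtain c where "x$k = ereal c" by (cases "x$k") auto
  then show ?thesis using that k by (simp add: add.commute)
qed

definition ray :: "ereal^'n \<Rightarrow> (ereal^'n) set" where
  "ray u = {(\<chi> i. l + u$i) | l. l \<noteq> \<infinity>}"

lemma ext_dirs_eq_ray_image: "ext_dirs C = ray ` {u. extreme C u}"
  unfolding ext_dirs_def ray_def by blast

lemma ray_shift: "ray (\<chi> i. ereal c + u$i) = ray u"
proof (intro equalityI subsetI)
  fix y assume "y \<in> ray (\<chi> i. ereal c + u$i)"
  then obtain l where "l \<noteq> \<infinity>" "y = (\<chi> i. (l + ereal c) + u$i)"
    unfolding ray_def by (auto simp: add.assoc)
  moreover have "l + ereal c \<noteq> \<infinity>" using \<open>l \<noteq> \<infinity>\<close> by (cases l) auto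
  ultimately show "y \<in> ray u" unfolding ray_def by blast
next
  fix y assume "y \<in> ray u"
  then obtain l where l: "l \<noteq> \<infinity>" "y = (\<chi> i. l + u$i)"
    unfolding ray_def by auto
  have "(l - ereal c) + ereal c = l" using l(1) by (cases l) auto
  then have "y = (\<chi> i. (l - ereal c) + (ereal c + u$i))"
    using l(2) by (simp only: add.assoc[symmetric])
  moreover have "l - ereal c \<noteq> \<infinity>" using l(1) by (cases l) auto
  ultimately show "y \<in> ray (\<chi> i. ereal c + u$i)" unfolding ray_def by auto
qed

lemma hdist_nonneg:
  fixes a :: "real^'n" and y :: "ereal^'n"
  shows "0 \<le> hdist (\<chi> i. ereal (a$i)) y"
  unfolding hdist_def
proof (rule Inf_greatest, clarify)
  fix l m :: real and i :: 'n
  assume "\<forall>i. ereal m + y$i \<le> (\<chi> i. ereal (a$i))$i \<and> (\<chi> i. ereal (a$i))$i \<le> ereal l + y$i"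
  then have "ereal m + y$i \<le> ereal (a$i)" "ereal (a$i) \<le> ereal l + y$i" by auto
  then show "0 \<le> ereal (l - m)" by (cases "y$i") auto
qed

lemma hball_empty: "r < 0 \<Longrightarrow> hball a r = {}"
  by (force simp: hball_def dest: order_trans[OF hdist_nonneg])

lemma hball_memE:
  assumes "y \<in> hball a r"
  obtains z where "y = (\<chi> i. ereal (z i))" "\<And>i l. z l - a$l \<le> z i - a$i + r"
proof -
  have "y$i \<noteq> -\<infinity>" for i
  proof
    assume "y$i = -\<infinity>"
    then have "hdist (\<chi> i. ereal (a$i)) y = \<infinity>"
      unfolding hdist_def top_ereal_def[symmetric] Inf_top_conv(1)
      by (auto simp: top_ereal_def dest!: spec[of _ i])
    then show False using assms unfolding hball_def by simp
  qed
  moreover have "y$i \<noteq> \<infinity>" for i using assms unfolding hball_def rmax_vec_def by simp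
  ultimately have "\<bar>y$i\<bar> \<noteq> \<infinity>" for i by (cases "y$i") auto
  moreover define z where "z i = real_of_ereal (y$i)" for i
  ultimately have y: "y = (\<chi> i. ereal (z i))"
    by (simp add: vec_eq_iff ereal_real')
  moreover have "z l - a$l \<le> z i - a$i + r" for i l
  proof -
    have "ereal (z l - a$l - (z i - a$i)) \<le> hdist (\<chi> i. ereal (a$i)) y"
      unfolding hdist_def
    proof (rule Inf_greatest, clarify)
      fix p q :: real
      assume "\<forall>i. ereal q + y$i \<le> (\<chi> i. ereal (a$i))$i \<and> (\<chi> i. ereal (a$i))$i \<le> ereal p + y$i"
      from this[rule_format, of i] this[rule_format, of l]
      show "ereal (z l - a$l - (z i - a$i)) \<le> ereal (p - q)" by (simp add: y)
    qed
    also have "\<dots> \<le> ereal r" using assms unfolding hball_def by simp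
    finally show ?thesis by simp
  qed
  ultimately show ?thesis using that by blast
qed

lemma hball_vertex:
  assumes "0 \<le> r"
  shows "(\<chi> l. ereal (if l = j then a$l else a$l - r)) \<in> hball a r"
proof -
  let ?g = "\<chi> l. ereal (if l = j then a$l else a$l - r)"
  have "\<forall>i. ereal 0 + ?g$i \<le> (\<chi> i. ereal (a$i))$i \<and> (\<chi> i. ereal (a$i))$i \<le> ereal r + ?g$i"
    using assms by auto
  then have "hdist (\<chi> i. ereal (a$i)) ?g \<le> ereal (r - 0)"
    unfolding hdist_def by (blast intro: Inf_lower)
  then show ?thesis unfolding hball_def rmax_vec_def by simp
qed

lemma hball_subset_le_inrad: "hball a r \<subseteq> C \<Longrightarrow> ereal r \<le> inrad C"
  unfolding inrad_def by (blast intro: Sup_upper)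

lemma inrad_nonneg: "0 \<le> inrad C"
proof (rule ereal_le_epsilon2)
  fix e :: real assume "0 < e"
  then have "ereal (-e) \<le> inrad C"
    using hball_empty[of "-e" 0] by (intro hball_subset_le_inrad) auto
  then show "0 \<le> inrad C + ereal e" by (cases "inrad C") auto
qed

lemma inrad_mono: "C \<subseteq> D \<Longrightarrow> inrad C \<le> inrad D"
  unfolding inrad_def by (rule Sup_subset_mono) blast

lemma inrad_posE:
  assumes "0 < inrad C"
  obtains a r where "0 < r" "hball a r \<subseteq> C"
  using assms unfolding inrad_def less_Sup_iff by auto

lemma inrad_le:
  assumes "0 \<le> M" and "\<And>a r. 0 < r \<Longrightarrow> hball a r \<subseteq> C \<Longrightarrow> ereal r \<le> M"
  shows "inrad C \<le> M"
  unfolding inrad_def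
proof (rule Sup_least, clarify)
  fix r a assume "hball a r \<subseteq> C"
  then show "ereal r \<le> M"
    using assms by (cases "0 < r") (auto intro: order_trans[of _ 0])
qed

text \<open>Column \<open>kk i\<close>, shifted by \<open>a\<^sub>i - w i\<close>, lies below the vertex \<open>a - r(1 - e\<^sub>i)\<close> of
\<open>B(a,r)\<close> and agrees with it in coordinate \<open>i\<close>.\<close>
definition apex_columns :: "ereal^'p^'n \<Rightarrow> real^'n \<Rightarrow> real \<Rightarrow> ('n \<Rightarrow> 'p) \<Rightarrow> ('n \<Rightarrow> real) \<Rightarrow> bool" where
  "apex_columns V a r kk w \<longleftrightarrow>
     (\<forall>i. V$i$(kk i) = ereal (w i) \<and> (\<forall>l. l \<noteq> i \<longrightarrow> V$l$(kk i) \<le> ereal (w i - a$i + a$l - r)))"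

lemma apex_columnsD:
  assumes "apex_columns V a r kk w"
  shows apex_columns_diag: "V$i$(kk i) = ereal (w i)"
    and apex_columns_off_diag: "l \<noteq> i \<Longrightarrow> V$l$(kk i) \<le> ereal (w i - a$i + a$l - r)"
  using assms unfolding apex_columns_def by blast+

lemma hball_subset_Col_imp_apex_column:
  fixes V :: "ereal^'p^'n"
  assumes ent: "\<forall>i k. V$i$k \<noteq> \<infinity>" and "0 \<le> r" and sub: "hball a r \<subseteq> Col J V"
  obtains k w where "k \<in> J" "V$j$k = ereal w" "\<And>l. l \<noteq> j \<Longrightarrow> V$l$k \<le> ereal (w - a$j + a$l - r)"
proof -
  let ?g = "\<chi> l. ereal (if l = j then a$l else a$l - r)"
  have "?g \<in> Col J V" using hball_vertex[OF \<open>0 \<le> r\<close>] sub by blast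
  then obtain x where x: "rmax_vec x" and g: "?g = (\<chi> i. SUP k\<in>J. V$i$k + x$k)"
    unfolding Col_def by auto
  have gj: "(SUP k\<in>J. V$j$k + x$k) = ereal (a$j)"
    using arg_cong[OF g, of "\<lambda>v. v$j"] by simp
  then have "J \<noteq> {}" by (auto simp: bot_ereal_def)
  then obtain k where "k \<in> J" and "(SUP k\<in>J. V$j$k + x$k) = V$j$k + x$k"
    by (rule finite_SUP_attained[OF finite])
  with gj have k: "k \<in> J" "V$j$k + x$k = ereal (a$j)" by simp_all
  have "V$j$k \<noteq> \<infinity>" "x$k \<noteq> \<infinity>" using ent x unfolding rmax_vec_def by simp_all
  with k(2) obtain w c where w: "V$j$k = ereal w" and c: "x$k = ereal c"
    by (cases "V$j$k"; cases "x$k") auto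
  have "V$l$k \<le> ereal (w - a$j + a$l - r)" if "l \<noteq> j" for l
  proof -
    have "V$l$k + x$k \<le> (SUP k\<in>J. V$l$k + x$k)" using k(1) by (rule SUP_upper)
    also have "\<dots> = ereal (a$l - r)"
      using arg_cong[OF g, of "\<lambda>v. v$l"] that by simp
    finally show ?thesis using k(2) w c by (cases "V$l$k") auto
  qed
  with k(1) w show ?thesis by (rule that)
qed

lemma hball_subset_Col_imp_apex_columns:
  fixes V :: "ereal^'p^'n"
  assumes ent: "\<forall>i k. V$i$k \<noteq> \<infinity>" and "0 \<le> r" and sub: "hball a r \<subseteq> Col J V"
  obtains kk w where "range kk \<subseteq> J" "apex_columns V a r kk w"
proof -
  have "\<forall>j. \<exists>k w. k \<in> J \<and> V$j$k = ereal w \<and> (\<forall>l. l \<noteq> j \<longrightarrow> V$l$k \<le> ereal (w - a$j + a$l - r))"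
    using hball_subset_Col_imp_apex_column[OF assms] by metis
  then obtain kk w where "\<forall>j. kk j \<in> J \<and> V$j$(kk j) = ereal (w j) \<and>
      (\<forall>l. l \<noteq> j \<longrightarrow> V$l$(kk j) \<le> ereal (w j - a$j + a$l - r))"
    by (metis (no_types))
  then show ?thesis using that unfolding apex_columns_def by blast
qed

lemma apex_columns_inj:
  assumes "0 < r" and apex: "apex_columns V a r kk w"
  shows "inj kk"
proof (rule injI, rule ccontr)
  fix i j assume "kk i = kk j" "i \<noteq> j"
  then have "ereal (w j) \<le> ereal (w i - a$i + a$j - r)" "ereal (w i) \<le> ereal (w j - a$j + a$i - r)"
    using apex_columns_off_diag[OF apex] apex_columns_diag[OF apex] by metis+
  then show False using \<open>0 < r\<close> by simp
qed

lemma hball_subset_Col_apex_columns: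
  fixes V :: "ereal^'p^'n"
  assumes ent: "\<forall>i k. V$i$k \<noteq> \<infinity>" and "0 < r" and apex: "apex_columns V a r kk w"
  shows "hball a r \<subseteq> Col (range kk) V"
proof
  fix y assume "y \<in> hball a r"
  then obtain z where y: "y = (\<chi> i. ereal (z i))" and z: "\<And>i l. z l - a$l \<le> z i - a$i + r"
    by (rule hball_memE) blast
  \<comment> \<open>scale column \<open>kk i\<close> so that it touches \<open>y\<close> in coordinate \<open>i\<close>\<close>
  define x :: "ereal^'p" where "x = (\<chi> k. ereal (z (inv kk k) - w (inv kk k)))"
  have xkk: "x$(kk i) = ereal (z i - w i)" for i
    using apex_columns_inj[OF \<open>0 < r\<close> apex] by (simp add: x_def)
  have "(SUP k\<in>range kk. V$l$k + x$k) = ereal (z l)" for l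
  proof (rule antisym)
    show "(SUP k\<in>range kk. V$l$k + x$k) \<le> ereal (z l)"
    proof (rule SUP_least, clarify)
      fix i
      show "V$l$(kk i) + x$(kk i) \<le> ereal (z l)"
      proof (cases "i = l")
        case True
        then show ?thesis using xkk apex_columns_diag[OF apex, of l] by simp
      next
        case False
        then have "V$l$(kk i) \<le> ereal (w i - a$i + a$l - r)"
          using apex_columns_off_diag[OF apex] by simp
        then show ?thesis using xkk z[of l i] z[of i l] by (cases "V$l$(kk i)") auto
      qed
    qed
    have "V$l$(kk l) + x$(kk l) = ereal (z l)"
      using xkk apex_columns_diag[OF apex, of l] by simp
    then show "ereal (z l) \<le> (SUP k\<in>range kk. V$l$k + x$k)"
      by (intro SUP_upper2[of "kk l"]) simp_all
  qed
  moreover have "rmax_vec x" unfolding rmax_vec_def x_def by simp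
  ultimately show "y \<in> Col (range kk) V"
    using Col_memI[where x=x and K="range kk" and V=V] y by simp
qed

lemma Col_apex_columns_below_column_eq:
  fixes V :: "ereal^'p^'n"
  assumes ent: "\<forall>i k. V$i$k \<noteq> \<infinity>" and "0 < r" and apex: "apex_columns V a r kk w"
    and v: "v \<in> Col (range kk) V" and below: "\<And>l. v$l \<le> V$l$(kk i)" and eq: "v$i = V$i$(kk i)"
  shows "v = column (kk i) V"
proof -
  obtain y where y: "rmax_vec y" and v_eq: "v = (\<chi> l. SUP k\<in>range kk. V$l$k + y$k)"
    using v unfolding Col_def by auto
  have v_ge: "V$l$(kk j) + y$(kk j) \<le> v$l" for l j
    unfolding v_eq by (auto intro: SUP_upper)
  obtain k where "k \<in> range kk" and "v$i = V$i$k + y$k"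
    using finite_SUP_attained[OF finite, of "range kk" "\<lambda>k. V$i$k + y$k"] v_eq by auto
  then obtain j where j: "V$i$(kk j) + y$(kk j) = ereal (w i)"
    using eq apex_columns_diag[OF apex, of i] by auto
  have "V$i$(kk j) \<noteq> \<infinity>" "y$(kk j) \<noteq> \<infinity>" using ent y unfolding rmax_vec_def by simp_all
  with j obtain b c where b: "V$i$(kk j) = ereal b" and c: "y$(kk j) = ereal c"
    by (cases "V$i$(kk j)"; cases "y$(kk j)") auto
  \<comment> \<open>coordinate \<open>i\<close> of \<open>v\<close> is attained by column \<open>kk i\<close> itself, with coefficient \<open>0\<close>\<close>
  have "j = i"
  proof (rule ccontr)
    assume "j \<noteq> i"
    have "ereal (w j + c) \<le> v$j"
      using v_ge[of j j] apex_columns_diag[OF apex, of j] c by simp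
    also have "\<dots> \<le> V$j$(kk i)" by (rule below)
    also have "\<dots> \<le> ereal (w i - a$i + a$j - r)"
      using apex_columns_off_diag[OF apex] \<open>j \<noteq> i\<close> by simp
    finally have "w j + c \<le> w i - a$i + a$j - r" by simp
    moreover have "b \<le> w j - a$j + a$i - r"
      using apex_columns_off_diag[OF apex, of i j] \<open>j \<noteq> i\<close> b by simp
    ultimately show False using j b c \<open>0 < r\<close> by simp
  qed
  then have "y$(kk i) = 0"
    using j b c apex_columns_diag[OF apex, of i] by (simp add: zero_ereal_def)
  then have "V$l$(kk i) \<le> v$l" for l using v_ge[of l i] by simp
  then show ?thesis using below by (simp add: vec_eq_iff column_def antisym)
qed

lemma extreme_Col_apex_column:
  fixes V :: "ereal^'p^'n"
  assumes ent: "\<forall>i k. V$i$k \<noteq> \<infinity>" and "0 < r" and apex: "apex_columns V a r kk w"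
  shows "extreme (Col (range kk) V) (column (kk i) V)"
  unfolding extreme_def
proof (intro conjI ballI impI)
  show "column (kk i) V \<in> Col (range kk) V" using column_in_Col[OF ent] by blast
  show "column (kk i) V \<noteq> (\<chi> i. -\<infinity>)"
  proof
    assume "column (kk i) V = (\<chi> i. -\<infinity>)"
    then have "(column (kk i) V)$i = -\<infinity>" by simp
    then show False using apex_columns_diag[OF apex, of i] by (simp add: column_def)
  qed
  fix v u assume v: "v \<in> Col (range kk) V" and u: "u \<in> Col (range kk) V"
    and max: "column (kk i) V = (\<chi> l. max (v$l) (u$l))"
  have col: "V$l$(kk i) = max (v$l) (u$l)" for l
    using arg_cong[OF max, of "\<lambda>x. x$l"] by (simp add: column_def)
  have "V$i$(kk i) = v$i \<or> V$i$(kk i) = u$i" using col[of i] by (auto simp: max_def)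
  then show "column (kk i) V = v \<or> column (kk i) V = u"
    using Col_apex_columns_below_column_eq[OF ent \<open>0 < r\<close> apex] v u col
    by (metis max.cobounded1 max.cobounded2)
qed

lemma ext_dirs_Col_apex_columns:
  fixes V :: "ereal^'p^'n"
  assumes ent: "\<forall>i k. V$i$k \<noteq> \<infinity>" and "0 < r" and apex: "apex_columns V a r kk w"
  shows "ext_dirs (Col (range kk) V) = range (\<lambda>i. ray (column (kk i) V))"
  unfolding ext_dirs_eq_ray_image
proof (intro equalityI subsetI)
  fix X assume "X \<in> ray ` {u. extreme (Col (range kk) V) u}"
  then obtain u where X: "X = ray u" and "extreme (Col (range kk) V) u" by blast
  then obtain k c where "k \<in> range kk" "u = (\<chi> i. ereal c + V$i$k)"
    using extreme_Col_imp_scaled_column[OF ent] by blast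
  then show "X \<in> range (\<lambda>i. ray (column (kk i) V))"
    using ray_shift[of c "column _ V"] X by (auto simp: column_def)
next
  fix X assume "X \<in> range (\<lambda>i. ray (column (kk i) V))"
  then show "X \<in> ray ` {u. extreme (Col (range kk) V) u}"
    using extreme_Col_apex_column[OF ent \<open>0 < r\<close> apex] by blast
qed

lemma inj_ray_apex_columns:
  fixes V :: "ereal^'p^'n"
  assumes ent: "\<forall>i k. V$i$k \<noteq> \<infinity>" and "0 < r" and apex: "apex_columns V a r kk w"
  shows "inj (\<lambda>i. ray (column (kk i) V))"
proof (rule injI, rule ccontr)
  fix i j assume rays: "ray (column (kk i) V) = ray (column (kk j) V)" and "i \<noteq> j"
  have "column (kk i) V \<in> ray (column (kk i) V)"
    unfolding ray_def by (rule CollectI, rule exI[of _ 0]) simp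
  then have "column (kk i) V \<in> ray (column (kk j) V)" by (simp only: rays)
  then obtain l where "l \<noteq> \<infinity>" and l: "\<And>m. V$m$(kk i) = l + V$m$(kk j)"
    unfolding ray_def by (auto simp: vec_eq_iff column_def)
  have "ereal (w i) = l + V$i$(kk j)"
    using l[of i] apex_columns_diag[OF apex, of i] by simp
  with \<open>l \<noteq> \<infinity>\<close> ent obtain d e where d: "l = ereal d" and e: "V$i$(kk j) = ereal e"
    by (cases l; cases "V$i$(kk j)") auto
  have "ereal (w i) = ereal (d + e)"
    using l[of i] apex_columns_diag[OF apex, of i] d e by simp
  moreover have "ereal e \<le> ereal (w j - a$j + a$i - r)"
    using apex_columns_off_diag[OF apex, of i j] \<open>i \<noteq> j\<close> e by simp
  moreover have "ereal (d + w j) \<le> ereal (w i - a$i + a$j - r)"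
    using l[of j] apex_columns_diag[OF apex, of j] apex_columns_off_diag[OF apex, of j i] \<open>i \<noteq> j\<close> d
    by simp
  ultimately show False using \<open>0 < r\<close> by simp
qed

lemma simplicial_Col_apex_columns:
  fixes V :: "ereal^'p^'n"
  assumes ent: "\<forall>i k. V$i$k \<noteq> \<infinity>" and "0 < r" and apex: "apex_columns V a r kk w"
  shows "simplicial (Col (range kk) V)"
  unfolding simplicial_def ext_dirs_Col_apex_columns[OF assms]
  using inj_ray_apex_columns[OF assms] by (simp add: card_image)

lemma hball_subset_Col_imp_simplicial_subcone:
  fixes V :: "ereal^'p^'n"
  assumes ent: "\<forall>i k. V$i$k \<noteq> \<infinity>" and "0 < r" and sub: "hball a r \<subseteq> Col J V"
  obtains K where "K \<subseteq> J" "card K = CARD('n)" "hball a r \<subseteq> Col K V" "simplicial (Col K V)"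
proof -
  have "0 \<le> r" using \<open>0 < r\<close> by simp
  then obtain kk w where "range kk \<subseteq> J" and apex: "apex_columns V a r kk w"
    using hball_subset_Col_imp_apex_columns[OF ent _ sub] by blast
  moreover have "card (range kk) = CARD('n)"
    using apex_columns_inj[OF \<open>0 < r\<close> apex] by (simp add: card_image)
  ultimately show ?thesis
    using that hball_subset_Col_apex_columns[OF ent \<open>0 < r\<close> apex]
      simplicial_Col_apex_columns[OF ent \<open>0 < r\<close> apex] by blast
qed

lemma ex_subset_card_eq:
  assumes "n \<le> card (UNIV :: 'a::finite set)"
  obtains J :: "'a::finite set" where "card J = n"
  using obtain_subset_with_card_n[OF assms] by blast

lemma inrad_Col_eq_0_if_few_columns:
  fixes V :: "ereal^'p^'n"
  assumes ent: "\<forall>i k. V$i$k \<noteq> \<infinity>" and "CARD('p) < CARD('n)"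
  shows "inrad (Col UNIV V) = 0"
proof -
  have "inrad (Col UNIV V) \<le> 0"
  proof (rule inrad_le)
    fix a and r :: real assume "0 < r" "hball a r \<subseteq> Col UNIV V"
    then obtain K :: "'p set" where "card K = CARD('n)"
      using hball_subset_Col_imp_simplicial_subcone[OF ent] by blast
    then show "ereal r \<le> 0"
      using card_mono[OF finite subset_UNIV, of K] \<open>CARD('p) < CARD('n)\<close> by simp
  qed simp
  then show ?thesis using inrad_nonneg[of "Col UNIV V"] by simp
qed

lemma inrad_Col_eq_Max_square_subcones:
  fixes V :: "ereal^'p^'n"
  assumes ent: "\<forall>i k. V$i$k \<noteq> \<infinity>" and "CARD('n) \<le> CARD('p)"
  shows "inrad (Col UNIV V) = Max {inrad (Col J V) | J :: 'p set. card J = CARD('n)}"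
    (is "_ = Max ?S")
proof (rule antisym)
  have fin: "finite ?S" by simp
  obtain J0 :: "'p set" where "card J0 = CARD('n)"
    using ex_subset_card_eq[OF \<open>CARD('n) \<le> CARD('p)\<close>] .
  then have J0: "inrad (Col J0 V) \<in> ?S" by blast
  show "inrad (Col UNIV V) \<le> Max ?S"
  proof (rule inrad_le)
    show "0 \<le> Max ?S"
      using inrad_nonneg Max_ge[OF fin J0] by (rule order_trans)
    fix a r assume "0 < r" "hball a r \<subseteq> Col UNIV V"
    then obtain K :: "'p set" where K: "card K = CARD('n)" "hball a r \<subseteq> Col K V"
      using hball_subset_Col_imp_simplicial_subcone[OF ent] by blast
    from K(2) have "ereal r \<le> inrad (Col K V)" by (rule hball_subset_le_inrad)
    also have "\<dots> \<le> Max ?S" using K(1) fin by (intro Max_ge) auto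
    finally show "ereal r \<le> Max ?S" .
  qed
  show "Max ?S \<le> inrad (Col UNIV V)"
    using fin J0 inrad_mono[OF Col_mono[OF ent subset_UNIV]]
    by (auto intro!: Max.boundedI)
qed

theorem corollary3p9:
  fixes V :: "ereal^'p^'n"
  assumes entries: "\<forall>i k. V$i$k \<noteq> \<infinity>"
    and no_inf_row: "\<forall>i. \<exists>k. V$i$k \<noteq> -\<infinity>"
    and no_inf_col: "\<forall>k. \<exists>i. V$i$k \<noteq> -\<infinity>"
  shows "inrad (Col UNIV V) =
           (if CARD('p) < CARD('n) then 0
            else Max {inrad (Col J V) | J :: 'p set. card J = CARD('n)})
         \<and> (inrad (Col UNIV V) > 0 \<longrightarrow>
           (\<exists>J :: 'p set. card J = CARD('n) \<and> inrad (Col J V) = inrad (Col UNIV V)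
                 \<and> simplicial (Col J V)))"
proof (intro conjI impI)
  let ?S = "{inrad (Col J V) | J :: 'p set. card J = CARD('n)}"
  show eq: "inrad (Col UNIV V) = (if CARD('p) < CARD('n) then 0 else Max ?S)"
    using inrad_Col_eq_0_if_few_columns[OF entries] inrad_Col_eq_Max_square_subcones[OF entries]
    by simp
  assume pos: "inrad (Col UNIV V) > 0"
  then have "CARD('n) \<le> CARD('p)" using eq by (auto split: if_splits)
  then have "?S \<noteq> {}" by (blast elim: ex_subset_card_eq)
  then have "Max ?S \<in> ?S" by (intro Max_in) simp_all
  then obtain J :: "'p set" where J: "card J = CARD('n)" "inrad (Col J V) = inrad (Col UNIV V)"
    using eq \<open>CARD('n) \<le> CARD('p)\<close> by auto
  with pos have "0 < inrad (Col J V)" by simp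
  then obtain a r where "0 < r" "hball a r \<subseteq> Col J V" by (rule inrad_posE)
  then obtain K where K: "K \<subseteq> J" "card K = CARD('n)" "simplicial (Col K V)"
    by (rule hball_subset_Col_imp_simplicial_subcone[OF entries])
  have "K = J" using card_subset_eq[OF finite K(1)] K(2) J(1) by simp
  then have "simplicial (Col J V)" using K(3) by simp
  with J show "\<exists>J :: 'p set. card J = CARD('n) \<and> inrad (Col J V) = inrad (Col UNIV V)
                 \<and> simplicial (Col J V)" by blast
qed

end
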